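(* Let $n\ge3$, $a>0$, $0<b<a/n$, $X=\{x\in\mathbb R^n:\sum_{i=1}^nx_i=a,\ x_i\ge b,\ i=1,\dots,n\}$, $p=1+1/\ln n$, $\gamma=1/(e\ln n)$ and $\omega(x)=\frac1{p\gamma}\sum_{i=1}^n|x_i|^p$. With $\|\cdot\|=\|\cdot\|_1$: (i) $\omega$ is strongly convex on $X$ with modulus $\mu(\omega)=\frac{e}{n\,a^{2-p}}$, i.e. $(\omega'(x)-\omega'(y))^\top(x-y)\ge\frac{e}{na^{2-p}}\|x-y\|_1^2$ for all $x,y\in X$; (ii) $D_{\omega,X}:=\sqrt{2[\max_X\omega-\min_X\omega]}\le\sqrt{\frac{2a^p}{p\gamma}\big(1-n^{-1/\ln n}\big)}$; (iii) for all $x,y\in X$, $V_x(y)\le\frac12M(\omega)\|x-y\|_1^2$ with $M(\omega)=\frac{e}{b^{1-1/\ln n}}$, where $V_x(y)=\omega(y)-\omega(x)-(y-x)^\top\nabla\omega(x)$.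
   Context: $e=\exp(1)$; $\|x\|_1=\sum_i|x_i|$. *)

theory Defs
  imports "HOL-Analysis.Analysis"
begin

definition norm1 :: "real ^ 'n \<Rightarrow> real" where
  "norm1 x = (\<Sum>i\<in>UNIV. \<bar>x $ i\<bar>)"

definition simplexX :: "real \<Rightarrow> real \<Rightarrow> (real ^ 'n) set" where
  "simplexX a b = {x. (\<Sum>i\<in>UNIV. x $ i) = a \<and> (\<forall>i. x $ i \<ge> b)}"

definition pexp :: "nat \<Rightarrow> real" where
  "pexp n = 1 + 1 / ln (real n)"

definition gam :: "nat \<Rightarrow> real" where
  "gam n = 1 / (exp 1 * ln (real n))"

definition omega :: "real ^ 'n \<Rightarrow> real" where
  "omega x = 1 / (pexp CARD('n) * gam CARD('n)) * (\<Sum>i\<in>UNIV. \<bar>x $ i\<bar> powr pexp CARD('n))"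

definition Dom :: "(real ^ 'n \<Rightarrow> real) \<Rightarrow> (real ^ 'n) set \<Rightarrow> real" where
  "Dom w X = sqrt (2 * ((SUP x\<in>X. w x) - (INF x\<in>X. w x)))"

definition bregV :: "(real ^ 'n \<Rightarrow> real) \<Rightarrow> (real ^ 'n \<Rightarrow> real ^ 'n) \<Rightarrow> real ^ 'n \<Rightarrow> real ^ 'n \<Rightarrow> real" where
  "bregV w g x y = w y - w x - (y - x) \<bullet> g x"

end

theory Submission
  imports Defs
begin

text \<open>
  Everything is reduced to one-dimensional facts about \<open>t \<mapsto> t powr p\<close> on \<open>(0, \<infinity>)\<close>:
  the Lagrange form of its second-order Taylor expansion gives convexity (tangent lines lie
  below) and, since \<open>p \<le> 2\<close>, an upper bound for the Taylor remainder on \<open>[b, \<infinity>)\<close>; the mean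
  value theorem gives strong monotonicity of \<open>t \<mapsto> t powr (p - 1)\<close> on \<open>(0, a]\<close>.
  Summing over coordinates and comparing \<open>\<Sum> z\<^sub>i\<^sup>2\<close> with \<open>\<parallel>z\<parallel>\<^sub>1\<^sup>2\<close> (in both directions)
  yields the strong convexity (i) and Bregman bound (iii); bounding the power sum on \<open>X\<close> above
  by \<open>a\<^sup>p\<close> (coordinates are at most \<open>a\<close>) and below by its value at the barycentre (convexity)
  yields (ii). The given gradient coincides on \<open>X\<close> with the explicit gradient
  \<open>omega_grad\<close> by uniqueness of derivatives, and \<open>n \<ge> 3 > e\<close> makes \<open>ln n > 1\<close>, i.e.
  \<open>1 < p \<le> 2\<close>, which is where the dimension hypothesis enters.
\<close>

lemma powr_taylor2:
  fixes u v p :: real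
  assumes u: "0 < u" and v: "0 < v" and uv: "u \<noteq> v"
  obtains t where "min u v < t" "t < max u v"
    "v powr p = u powr p + p * u powr (p - 1) * (v - u) + p * (p - 1) / 2 * t powr (p - 2) * (v - u)\<^sup>2"
proof -
  define D where "D = (\<lambda>m::nat. if m = 0 then (\<lambda>t::real. t powr p)
     else if m = 1 then (\<lambda>t. p * t powr (p - 1)) else (\<lambda>t. p * (p - 1) * t powr (p - 2)))"
  have "\<forall>m t. m < 2 \<and> min u v \<le> t \<and> t \<le> max u v \<longrightarrow> (D m has_real_derivative D (Suc m) t) (at t)"
  proof (intro allI impI)
    fix m :: nat and t :: real
    assume m_t: "m < 2 \<and> min u v \<le> t \<and> t \<le> max u v"
    then have "0 < t" using u v by linarith
    from m_t consider "m = 0" | "m = 1" by linarith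
    then show "(D m has_real_derivative D (Suc m) t) (at t)"
      by cases (use \<open>0 < t\<close> in \<open>auto simp: D_def algebra_simps
          intro!: derivative_eq_intros has_real_derivative_powr\<close>)
  qed
  from Taylor[of 2 D "D 0" "min u v" "max u v" u v, OF _ _ this] uv obtain t
    where t: "if v < u then v < t \<and> t < u else u < t \<and> t < v"
      and expansion: "D 0 v = (\<Sum>m<2. D m u / fact m * (v - u) ^ m) + D 2 t / fact 2 * (v - u)\<^sup>2"
    by auto
  show thesis
    by (rule that[of t]) (use t expansion in \<open>auto simp: D_def numeral_2_eq_2 split: if_splits\<close>)
qed

lemma powr_above_tangent:
  fixes u v p :: real
  assumes "0 < u" "0 < v" "1 \<le> p"
  shows "u powr p + p * u powr (p - 1) * (v - u) \<le> v powr p"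
proof (cases "u = v")
  case False
  then obtain t where "v powr p = u powr p + p * u powr (p - 1) * (v - u)
      + p * (p - 1) / 2 * t powr (p - 2) * (v - u)\<^sup>2"
    using powr_taylor2[OF assms(1,2)] by blast
  moreover have "0 \<le> p * (p - 1) / 2 * t powr (p - 2) * (v - u)\<^sup>2"
    using assms(3) by simp
  ultimately show ?thesis by linarith
qed simp

text \<open>For \<open>1 \<le> p \<le> 2\<close> the second derivative \<open>p (p - 1) t powr (p - 2)\<close> is decreasing,
  so on \<open>[b, \<infinity>)\<close> the Taylor remainder is controlled by its value at \<open>b\<close>.\<close>
lemma powr_taylor_remainder_le:
  fixes u v p b :: real
  assumes "0 < b" "b \<le> u" "b \<le> v" "1 \<le> p" "p \<le> 2"
  shows "v powr p - u powr p - p * u powr (p - 1) * (v - u) \<le> p * (p - 1) / 2 * b powr (p - 2) * (v - u)\<^sup>2"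
proof (cases "u = v")
  case False
  obtain t where t: "min u v < t"
    and expansion: "v powr p = u powr p + p * u powr (p - 1) * (v - u)
      + p * (p - 1) / 2 * t powr (p - 2) * (v - u)\<^sup>2"
    using powr_taylor2[of u v p] False assms by auto
  have "t powr (p - 2) \<le> b powr (p - 2)"
    by (rule powr_mono2') (use assms t in auto)
  then have "p * (p - 1) / 2 * t powr (p - 2) * (v - u)\<^sup>2 \<le> p * (p - 1) / 2 * b powr (p - 2) * (v - u)\<^sup>2"
    using assms by (intro mult_right_mono mult_left_mono) auto
  then show ?thesis using expansion by linarith
qed simp

text \<open>For \<open>0 < q \<le> 1\<close> the map \<open>t \<mapsto> t powr q\<close> is strongly monotone on \<open>(0, a]\<close>
  with modulus \<open>q a powr (q - 1)\<close>, the minimum of its derivative there.\<close>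
lemma powr_strongly_monotone:
  fixes u v q a :: real
  assumes u: "0 < u" "u \<le> a" and v: "0 < v" "v \<le> a" and q: "0 < q" "q \<le> 1"
  shows "q * a powr (q - 1) * (u - v)\<^sup>2 \<le> (u powr q - v powr q) * (u - v)"
proof -
  have ordered: "q * a powr (q - 1) * (s - r)\<^sup>2 \<le> (s powr q - r powr q) * (s - r)"
    if "0 < r" "r < s" "s \<le> a" for r s
  proof -
    have deriv: "((\<lambda>t. t powr q) has_real_derivative q * t powr (q - 1)) (at t)" if "r \<le> t" for t
      using that \<open>0 < r\<close> by (auto intro!: has_real_derivative_powr)
    obtain z where z: "r < z" "z < s"
      and mvt: "s powr q - r powr q = (s - r) * (q * z powr (q - 1))"
      using MVT2[OF \<open>r < s\<close> deriv] by blast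
    have "a powr (q - 1) \<le> z powr (q - 1)"
      by (rule powr_mono2') (use q z that in auto)
    then have "q * a powr (q - 1) * (s - r)\<^sup>2 \<le> q * z powr (q - 1) * (s - r)\<^sup>2"
      using q by (intro mult_right_mono mult_left_mono) auto
    then show ?thesis unfolding mvt by (simp add: power2_eq_square algebra_simps)
  qed
  consider "v < u" | "u = v" | "u < v" by linarith
  then show ?thesis
  proof cases
    case 3
    then show ?thesis using ordered[of u v] u v by (simp add: power2_commute algebra_simps)
  qed (use ordered[of v u] u v in auto)
qed

lemma sum_squares_le_norm1_sq:
  fixes x :: "real ^ 'n"
  shows "(\<Sum>i\<in>UNIV. (x $ i)\<^sup>2) \<le> (norm1 x)\<^sup>2"
proof -
  have "(\<Sum>i\<in>UNIV. (x $ i)\<^sup>2) = (norm x)\<^sup>2"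
    unfolding power2_norm_eq_inner inner_vec_def by (simp add: power2_eq_square)
  also have "\<dots> \<le> (norm1 x)\<^sup>2"
    unfolding norm1_def by (intro power_mono norm_le_l1_cart) simp
  finally show ?thesis .
qed

lemma norm1_sq_le_card_sum_squares:
  fixes x :: "real ^ 'n"
  shows "(norm1 x)\<^sup>2 \<le> real CARD('n) * (\<Sum>i\<in>UNIV. (x $ i)\<^sup>2)"
  using sum_squared_le_sum_of_squares[of "\<lambda>i. \<bar>x $ i\<bar>" UNIV]
  by (simp add: norm1_def mult.commute)

lemma simplexX_coord_bounds:
  fixes x :: "real ^ 'n"
  assumes "x \<in> simplexX a b" "0 \<le> b"
  shows "b \<le> x $ i" "x $ i \<le> a"
proof -
  have sum_x: "(\<Sum>j\<in>UNIV. x $ j) = a" and lower: "\<forall>j. b \<le> x $ j"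
    using assms unfolding simplexX_def by auto
  show "b \<le> x $ i" using lower by blast
  have "x $ i \<le> x $ i + (\<Sum>j\<in>UNIV - {i}. x $ j)"
    using lower assms(2) by (intro add_increasing2 sum_nonneg) (auto intro: order_trans)
  also have "\<dots> = a" using sum_x by (simp add: sum.remove)
  finally show "x $ i \<le> a" .
qed

lemma simplexX_coord_pos:
  fixes x :: "real ^ 'n"
  assumes "x \<in> simplexX a b" "0 < b"
  shows "0 < x $ i"
  using simplexX_coord_bounds(1)[OF assms(1) less_imp_le[OF assms(2)]] assms(2) by (meson less_le_trans)

lemma barycentre_in_simplexX:
  assumes "b \<le> a / real CARD('n)"
  shows "(\<chi> i::'n::finite. a / real CARD('n)) \<in> simplexX a b"
  using assms by (simp add: simplexX_def)

lemma simplexX_power_sum_le: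
  fixes x :: "real ^ 'n"
  assumes x: "x \<in> simplexX a b" and b: "0 < b" and p: "1 \<le> p"
  shows "(\<Sum>i\<in>UNIV. x $ i powr p) \<le> a powr p"
proof -
  have "x $ i powr p \<le> x $ i * a powr (p - 1)" for i
  proof -
    have xi: "0 < x $ i" "x $ i \<le> a"
      using simplexX_coord_pos[OF x b] simplexX_coord_bounds(2)[OF x] b by auto
    then have "x $ i powr p = x $ i * x $ i powr (p - 1)"
      by (simp add: powr_diff)
    also have "\<dots> \<le> x $ i * a powr (p - 1)"
      using xi p by (intro mult_left_mono powr_mono2) auto
    finally show ?thesis .
  qed
  then have "(\<Sum>i\<in>UNIV. x $ i powr p) \<le> (\<Sum>i\<in>UNIV. x $ i) * a powr (p - 1)"
    by (simp add: sum_mono sum_distrib_right)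
  also have "\<dots> = a powr p"
  proof -
    have "0 < a"
      using less_le_trans[OF simplexX_coord_pos[OF x b] simplexX_coord_bounds(2)[OF x less_imp_le[OF b]]] .
    then show ?thesis using x unfolding simplexX_def by (simp add: powr_diff)
  qed
  finally show ?thesis .
qed

lemma simplexX_power_sum_ge:
  fixes x :: "real ^ 'n"
  assumes x: "x \<in> simplexX a b" and b: "0 < b" and p: "1 \<le> p"
  shows "a powr p * real CARD('n) powr (1 - p) \<le> (\<Sum>i\<in>UNIV. x $ i powr p)"
proof -
  define n where "n = real CARD('n)"
  define u where "u = a / n"
  have pos: "0 < x $ i" for i using simplexX_coord_pos[OF x b] .
  have sum_x: "(\<Sum>i\<in>UNIV. x $ i) = a" using x unfolding simplexX_def by simp
  have "0 < a" using less_le_trans[OF pos simplexX_coord_bounds(2)[OF x less_imp_le[OF b]]] .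
  then have "0 < u" "0 < n" unfolding u_def n_def by auto
  have "(\<Sum>i\<in>UNIV. u powr p + p * u powr (p - 1) * (x $ i - u)) = n * u powr p"
    using sum_x by (simp add: sum.distrib sum_subtractf flip: sum_distrib_left)
      (simp add: u_def n_def)
  also have "\<dots> = a powr p * n powr (1 - p)"
    using \<open>0 < a\<close> \<open>0 < n\<close> by (simp add: u_def powr_divide powr_diff)
  finally have "a powr p * n powr (1 - p) = (\<Sum>i\<in>UNIV. u powr p + p * u powr (p - 1) * (x $ i - u))" ..
  also have "\<dots> \<le> (\<Sum>i\<in>UNIV. x $ i powr p)"
    by (intro sum_mono powr_above_tangent \<open>0 < u\<close> pos p)
  finally show ?thesis unfolding n_def .
qed

lemma ln_gt_1:
  assumes "3 \<le> n"
  shows "1 < ln (real n)"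
proof -
  have "exp 1 < real n" using e_less_272 assms by linarith
  moreover have "0 < real n" using assms by simp
  ultimately have "ln (exp 1) < ln (real n)" by (subst ln_less_cancel_iff) auto
  then show ?thesis by simp
qed

lemma pexp_ge_1: "1 \<le> n \<Longrightarrow> 1 \<le> pexp n"
  by (simp add: pexp_def)

lemma pexp_le_2: "3 \<le> n \<Longrightarrow> pexp n \<le> 2"
  using ln_gt_1[of n] by (simp add: pexp_def)

lemma gam_nonneg: "0 \<le> gam n"
  by (cases "n = 0") (simp_all add: gam_def)

lemma gam_pos: "3 \<le> n \<Longrightarrow> 0 < gam n"
  using ln_gt_1[of n] by (simp add: gam_def zero_less_mult_iff)

lemma pexp_minus_1_div_gam: "3 \<le> n \<Longrightarrow> (pexp n - 1) / gam n = exp 1"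
  using ln_gt_1[of n] by (simp add: pexp_def gam_def)

lemma omega_nonneg_eq:
  fixes x :: "real ^ 'n"
  assumes "\<And>i. 0 \<le> x $ i"
  shows "omega x = (\<Sum>i\<in>UNIV. x $ i powr pexp CARD('n)) / (pexp CARD('n) * gam CARD('n))"
  using assms by (simp add: omega_def)

definition omega_grad :: "real ^ 'n \<Rightarrow> real ^ 'n" where
  "omega_grad x = (\<chi> i. x $ i powr (pexp CARD('n) - 1) / gam CARD('n))"

lemma omega_has_derivative:
  fixes x :: "real ^ 'n"
  assumes pos: "\<And>i. 0 < x $ i"
  shows "(omega has_derivative (\<lambda>h. omega_grad x \<bullet> h)) (at x)"
proof -
  define p where "p = pexp CARD('n)"
  define c where "c = 1 / (p * gam CARD('n))"
  have coord: "((\<lambda>t. \<bar>t\<bar> powr p) has_real_derivative p * x $ i powr (p - 1)) (at (x $ i))" for i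
  proof (rule has_field_derivative_transform_within_open[OF has_real_derivative_powr])
    show "t powr p = \<bar>t\<bar> powr p" if "t \<in> {0<..}" for t using that by simp
  qed (use pos in auto)
  have "((\<lambda>y. \<bar>y $ i\<bar> powr p) has_derivative (\<lambda>h. h $ i * (p * x $ i powr (p - 1)))) (at x)" for i
    using DERIV_compose_FDERIV[OF coord bounded_linear.has_derivative[OF bounded_linear_vec_nth
          has_derivative_ident]] by simp
  then have "(omega has_derivative (\<lambda>h. c * (\<Sum>i\<in>UNIV. h $ i * (p * x $ i powr (p - 1))))) (at x)"
    unfolding omega_def p_def[symmetric] c_def by (intro has_derivative_mult_right has_derivative_sum)
  moreover have "c * (\<Sum>i\<in>UNIV. h $ i * (p * x $ i powr (p - 1))) = omega_grad x \<bullet> h" for h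
  proof -
    have "c * p = 1 / gam CARD('n)"
      using pexp_ge_1[of "CARD('n)"] by (simp add: c_def p_def)
    then have "c * (h $ i * (p * x $ i powr (p - 1))) = x $ i powr (p - 1) / gam CARD('n) * h $ i" for i
      by (metis mult.commute mult.left_commute times_divide_eq_left mult_1)
    then show ?thesis
      unfolding omega_grad_def inner_vec_def sum_distrib_left p_def[symmetric] by simp
  qed
  ultimately show ?thesis by simp
qed

lemma gradient_eq_omega_grad:
  fixes x g :: "real ^ 'n"
  assumes "x \<in> simplexX a b" "0 < b"
    and "(omega has_derivative (\<lambda>h. g \<bullet> h)) (at x)"
  shows "g = omega_grad x"
proof -
  have "0 < x $ i" for i using simplexX_coord_pos[OF assms(1,2)] .
  then have "(\<lambda>h. g \<bullet> h) = (\<lambda>h. omega_grad x \<bullet> h)"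
    using has_derivative_unique[OF assms(3) omega_has_derivative] by blast
  then have "(g - omega_grad x) \<bullet> (g - omega_grad x) = 0"
    by (metis inner_diff_left right_minus_eq)
  then show ?thesis by simp
qed

lemma omega_grad_strongly_monotone:
  fixes x y :: "real ^ 'n"
  assumes n: "3 \<le> CARD('n)" and b: "0 < b" and x: "x \<in> simplexX a b" and y: "y \<in> simplexX a b"
  shows "exp 1 / (real CARD('n) * a powr (2 - pexp CARD('n))) * (norm1 (x - y))\<^sup>2
           \<le> (omega_grad x - omega_grad y) \<bullet> (x - y)"
proof -
  define n where "n = real CARD('n)"
  define q where "q = pexp CARD('n) - 1"
  define \<gamma> where "\<gamma> = gam CARD('n)"
  have ln_n: "1 < ln n" using ln_gt_1[OF n] by (simp add: n_def)
  then have q: "0 < q" "q \<le> 1"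
    using n by (simp_all add: q_def pexp_def n_def divide_le_eq)
  have "0 < \<gamma>" using gam_pos[OF n] by (simp add: \<gamma>_def)
  have q_\<gamma>: "q / \<gamma> = exp 1" using pexp_minus_1_div_gam[OF n] by (simp add: q_def \<gamma>_def)
  have coords: "0 < x $ i" "x $ i \<le> a" "0 < y $ i" "y $ i \<le> a" for i
    using simplexX_coord_pos[OF x b] simplexX_coord_pos[OF y b]
      simplexX_coord_bounds(2)[OF x] simplexX_coord_bounds(2)[OF y] b by auto
  have "0 < a" using coords(1,2) by (rule less_le_trans)
  have "exp 1 / (n * a powr (2 - pexp CARD('n))) * (norm1 (x - y))\<^sup>2
      = q * a powr (q - 1) / \<gamma> * ((norm1 (x - y))\<^sup>2 / n)"
    using \<open>0 < a\<close> by (simp add: q_\<gamma>[symmetric] q_def powr_diff powr_add field_simps)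
  also have "\<dots> \<le> q * a powr (q - 1) / \<gamma> * (\<Sum>i\<in>UNIV. (x $ i - y $ i)\<^sup>2)"
    using norm1_sq_le_card_sum_squares[of "x - y"] n q \<open>0 < \<gamma>\<close>
    by (intro mult_left_mono) (simp_all add: n_def divide_le_eq mult.commute)
  also have "\<dots> = q * a powr (q - 1) * (\<Sum>i\<in>UNIV. (x $ i - y $ i)\<^sup>2) / \<gamma>"
    by simp
  also have "\<dots> \<le> (\<Sum>i\<in>UNIV. (x $ i powr q - y $ i powr q) * (x $ i - y $ i)) / \<gamma>"
  proof (rule divide_right_mono)
    show "q * a powr (q - 1) * (\<Sum>i\<in>UNIV. (x $ i - y $ i)\<^sup>2)
        \<le> (\<Sum>i\<in>UNIV. (x $ i powr q - y $ i powr q) * (x $ i - y $ i))"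
      unfolding sum_distrib_left by (intro sum_mono powr_strongly_monotone coords q)
  qed (use \<open>0 < \<gamma>\<close> in simp)
  also have "\<dots> = (omega_grad x - omega_grad y) \<bullet> (x - y)"
    by (simp add: omega_grad_def inner_vec_def sum_divide_distrib q_def \<gamma>_def
        flip: diff_divide_distrib times_divide_eq_left)
  finally show ?thesis unfolding n_def .
qed

lemma Dom_le_of_range_bounds:
  fixes w :: "real ^ 'n \<Rightarrow> real"
  assumes "X \<noteq> {}" and "\<And>x. x \<in> X \<Longrightarrow> lo \<le> w x \<and> w x \<le> hi"
  shows "Dom w X \<le> sqrt (2 * (hi - lo))"
proof -
  have "(SUP x\<in>X. w x) \<le> hi" "lo \<le> (INF x\<in>X. w x)"
    using assms by (auto intro!: cSUP_least cINF_greatest)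
  then show ?thesis unfolding Dom_def by simp
qed

lemma Dom_omega_simplexX_le:
  assumes b: "0 < b" "b \<le> a / real CARD('n)"
  shows "Dom omega (simplexX a b :: (real ^ 'n) set)
           \<le> sqrt (2 * a powr pexp CARD('n) / (pexp CARD('n) * gam CARD('n))
                   * (1 - real CARD('n) powr (- 1 / ln (real CARD('n)))))"
proof -
  define p where "p = pexp CARD('n)"
  define n where "n = real CARD('n)"
  define lo where "lo = a powr p * n powr (1 - p) / (p * gam CARD('n))"
  define hi where "hi = a powr p / (p * gam CARD('n))"
  have "0 \<le> p * gam CARD('n)"
    using pexp_ge_1[of "CARD('n)"] gam_nonneg[of "CARD('n)"] by (simp add: p_def)
  have "lo \<le> omega x \<and> omega x \<le> hi" if x: "x \<in> simplexX a b" for x :: "real ^ 'n"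
  proof -
    have "0 \<le> x $ i" for i using simplexX_coord_pos[OF x b(1)] less_imp_le by blast
    then have "omega x = (\<Sum>i\<in>UNIV. x $ i powr p) / (p * gam CARD('n))"
      unfolding p_def by (rule omega_nonneg_eq)
    with simplexX_power_sum_le[OF x b(1)] simplexX_power_sum_ge[OF x b(1)] pexp_ge_1[of "CARD('n)"]
      \<open>0 \<le> p * gam CARD('n)\<close> show ?thesis
      by (simp add: lo_def hi_def n_def p_def divide_right_mono)
  qed
  then have "Dom omega (simplexX a b :: (real ^ 'n) set) \<le> sqrt (2 * (hi - lo))"
    using barycentre_in_simplexX[OF b(2)] by (intro Dom_le_of_range_bounds) auto
  also have "2 * (hi - lo) = 2 * a powr p / (p * gam CARD('n)) * (1 - n powr (- 1 / ln n))"
    by (simp add: lo_def hi_def p_def n_def pexp_def diff_divide_distrib right_diff_distrib)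
  finally show ?thesis unfolding p_def n_def .
qed

text \<open>Part (iii): the Bregman distance of \<open>\<omega>\<close> is bounded by \<open>M(\<omega>)/2 \<parallel>x - y\<parallel>\<^sub>1\<^sup>2\<close>
  with \<open>M(\<omega>) = e / b\<^sup>2\<^sup>-\<^sup>p\<close>, the largest curvature of \<open>\<omega>\<close> on the simplex.\<close>
lemma bregV_omega_le:
  fixes x y :: "real ^ 'n"
  assumes n: "3 \<le> CARD('n)" and b: "0 < b" and x: "x \<in> simplexX a b" and y: "y \<in> simplexX a b"
  shows "bregV omega omega_grad x y
           \<le> 1 / 2 * (exp 1 / b powr (1 - 1 / ln (real CARD('n)))) * (norm1 (x - y))\<^sup>2"
proof -
  define p where "p = pexp CARD('n)"
  define \<gamma> where "\<gamma> = gam CARD('n)"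
  have p: "1 \<le> p" "p \<le> 2" using pexp_ge_1[of "CARD('n)"] pexp_le_2[OF n] by (simp_all add: p_def)
  have "0 < \<gamma>" using gam_pos[OF n] by (simp add: \<gamma>_def)
  have coords: "b \<le> x $ i" "b \<le> y $ i" for i
    using simplexX_coord_bounds[OF x] simplexX_coord_bounds[OF y] b by auto
  have "bregV omega omega_grad x y
      = (\<Sum>i\<in>UNIV. y $ i powr p - x $ i powr p - p * x $ i powr (p - 1) * (y $ i - x $ i)) / (p * \<gamma>)"
    using coords b p \<open>0 < \<gamma>\<close>
    by (simp add: bregV_def omega_nonneg_eq omega_grad_def inner_vec_def p_def \<gamma>_def
        sum_subtractf diff_divide_distrib sum_divide_distrib less_le_trans[OF b] less_imp_le)
      (simp add: field_simps)
  also have "\<dots> \<le> (\<Sum>i\<in>UNIV. p * (p - 1) / 2 * b powr (p - 2) * (y $ i - x $ i)\<^sup>2) / (p * \<gamma>)"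
    using p \<open>0 < \<gamma>\<close> by (intro divide_right_mono sum_mono powr_taylor_remainder_le b coords) auto
  also have "\<dots> = p * (p - 1) / 2 * b powr (p - 2) * (\<Sum>i\<in>UNIV. (x $ i - y $ i)\<^sup>2) / (p * \<gamma>)"
    by (simp add: sum_distrib_left power2_commute)
  also have "\<dots> = (p - 1) / \<gamma> / 2 * b powr (p - 2) * (\<Sum>i\<in>UNIV. (x $ i - y $ i)\<^sup>2)"
    using p \<open>0 < \<gamma>\<close> by (simp add: field_simps)
  also have "\<dots> \<le> (p - 1) / \<gamma> / 2 * b powr (p - 2) * (norm1 (x - y))\<^sup>2"
    using sum_squares_le_norm1_sq[of "x - y"] p \<open>0 < \<gamma>\<close> by (intro mult_left_mono) auto
  also have "(p - 1) / \<gamma> / 2 * b powr (p - 2) = 1 / 2 * (exp 1 / b powr (1 - 1 / ln (real CARD('n))))"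
  proof -
    have "b powr (p - 2) = 1 / b powr (1 - 1 / ln (real CARD('n)))"
      unfolding powr_minus_divide[symmetric] by (simp add: p_def pexp_def)
    then show ?thesis
      using pexp_minus_1_div_gam[OF n] by (simp add: p_def \<gamma>_def)
  qed
  finally show ?thesis .
qed

theorem mainTheorem15:
  fixes a b :: real and grad :: "real ^ 'n \<Rightarrow> real ^ 'n"
  assumes n3: "CARD('n) \<ge> 3"
    and a: "a > 0" and b0: "0 < b" and ba: "b < a / real CARD('n)"
    and grad: "\<forall>x\<in>simplexX a b. (omega has_derivative (\<lambda>h. grad x \<bullet> h)) (at x)"
  shows "(\<forall>x\<in>simplexX a b. \<forall>y\<in>simplexX a b.
            (grad x - grad y) \<bullet> (x - y)
              \<ge> exp 1 / (real CARD('n) * a powr (2 - pexp CARD('n))) * (norm1 (x - y))\<^sup>2)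
       \<and> Dom omega (simplexX a b :: (real ^ 'n) set)
           \<le> sqrt (2 * a powr pexp CARD('n) / (pexp CARD('n) * gam CARD('n))
                   * (1 - real CARD('n) powr (- 1 / ln (real CARD('n)))))
       \<and> (\<forall>x\<in>simplexX a b. \<forall>y\<in>simplexX a b.
            bregV omega grad x y
              \<le> 1 / 2 * (exp 1 / b powr (1 - 1 / ln (real CARD('n)))) * (norm1 (x - y))\<^sup>2)"
proof -
  have grad_eq: "grad x = omega_grad x" if "x \<in> simplexX a b" for x
    using gradient_eq_omega_grad[OF that b0] grad that by blast
  have "bregV omega grad x y = bregV omega omega_grad x y" if "x \<in> simplexX a b" for x y
    using grad_eq[OF that] by (simp add: bregV_def)
  then show ?thesis
    using omega_grad_strongly_monotone[OF n3 b0] bregV_omega_le[OF n3 b0]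
      Dom_omega_simplexX_le[OF b0 less_imp_le[OF ba]]
    by (simp add: grad_eq)
qed

end
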